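(* Let $V$ be a finite-dimensional real vector space with a Lorentzian inner product $g$, and let $V=E_1\oplus\cdots\oplus E_r$ ($r\ge1$) be a $g$-orthogonal direct sum of subspaces on each of which $g$ is non-degenerate, with $E_r$ Lorentzian. For $1\le\beta\le r$ let $g_\beta(X,Y)=g(X_\beta,Y_\beta)$, where $X_\beta,Y_\beta$ are the $E_\beta$-components. Let $p\in E_r$ be a non-zero light-like vector and $\theta=g(p,\cdot)$. Let $\bar g_1=g,\bar g_2,\dots,\bar g_{r+1}$ be linearly independent symmetric bilinear forms on $V$ with $$\bar g_\alpha=\sum_{\beta=1}^r C_{\beta\alpha}g_\beta+C_{r+1\,\alpha}\,\theta\otimes\theta,$$ and assume $C_{r\alpha}=0$ and $C_{r+1\,\alpha}\neq0$ for all $2\le\alpha\le r+1$. Let $W=\bigcap_{\alpha=2}^{r+1}\ker\bar g_\alpha$ and let $W^{\perp_g}$ be its $g$-orthogonal complement. Then $$\{X\in V\mid \bar g_\alpha(X,Y)=0\text{ for all }2\le\alpha\le r+1\text{ and all }Y\in W^{\perp_g}\}=E_r.$$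
   Context: For a symmetric bilinear form $b$ on $V$, $\ker b=\{X\in V\mid b(X,Y)=0\ \forall Y\in V\}$. *)

theory Defs
  imports "HOL-Analysis.Analysis"
begin

definition sym_bilinear :: "('a::real_vector \<Rightarrow> 'a \<Rightarrow> real) \<Rightarrow> bool" where
  "sym_bilinear b \<longleftrightarrow> bilinear b \<and> (\<forall>x y. b x y = b y x)"

definition kerb :: "('a \<Rightarrow> 'a \<Rightarrow> real) \<Rightarrow> 'a set" where
  "kerb b = {X. \<forall>Y. b X Y = 0}"

definition nondegenerate_on :: "('a \<Rightarrow> 'a \<Rightarrow> real) \<Rightarrow> 'a::real_vector set \<Rightarrow> bool" where
  "nondegenerate_on b S \<longleftrightarrow> (\<forall>x\<in>S. (\<forall>y\<in>S. b x y = 0) \<longrightarrow> x = 0)"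

definition neg_index :: "('a::euclidean_space \<Rightarrow> 'a \<Rightarrow> real) \<Rightarrow> 'a set \<Rightarrow> nat" where
  "neg_index b S = Max {dim U | U. subspace U \<and> U \<subseteq> S \<and> (\<forall>x\<in>U. x \<noteq> 0 \<longrightarrow> b x x < 0)}"

definition lorentzian_on :: "('a::euclidean_space \<Rightarrow> 'a \<Rightarrow> real) \<Rightarrow> 'a set \<Rightarrow> bool" where
  "lorentzian_on b S \<longleftrightarrow> nondegenerate_on b S \<and> neg_index b S = 1"

definition lorentzian :: "('a::euclidean_space \<Rightarrow> 'a \<Rightarrow> real) \<Rightarrow> bool" where
  "lorentzian b \<longleftrightarrow> sym_bilinear b \<and> lorentzian_on b UNIV"

definition direct_sum :: "(nat \<Rightarrow> 'a::real_vector set) \<Rightarrow> nat \<Rightarrow> bool" where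
  "direct_sum E r \<longleftrightarrow>
     (\<forall>i\<in>{1..r}. subspace (E i)) \<and>
     (\<forall>v. \<exists>x. (\<forall>i\<in>{1..r}. x i \<in> E i) \<and> v = (\<Sum>i=1..r. x i)) \<and>
     (\<forall>x. (\<forall>i\<in>{1..r}. x i \<in> E i) \<and> (\<Sum>i=1..r. x i) = 0 \<longrightarrow> (\<forall>i\<in>{1..r}. x i = 0))"

definition dcomp :: "(nat \<Rightarrow> 'a::real_vector set) \<Rightarrow> nat \<Rightarrow> nat \<Rightarrow> 'a \<Rightarrow> 'a" where
  "dcomp E r \<beta> v = (THE y. \<exists>x. (\<forall>i\<in>{1..r}. x i \<in> E i) \<and> v = (\<Sum>i=1..r. x i) \<and> y = x \<beta>)"

definition gcomp :: "('a::real_vector \<Rightarrow> 'a \<Rightarrow> real) \<Rightarrow> (nat \<Rightarrow> 'a set) \<Rightarrow> nat \<Rightarrow> nat \<Rightarrow> 'a \<Rightarrow> 'a \<Rightarrow> real" where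
  "gcomp g E r \<beta> X Y = g (dcomp E r \<beta> X) (dcomp E r \<beta> Y)"

definition g_orth_compl :: "('a \<Rightarrow> 'a \<Rightarrow> real) \<Rightarrow> 'a set \<Rightarrow> 'a set" where
  "g_orth_compl g W = {Y. \<forall>w\<in>W. g w Y = 0}"

end

theory Submission
  imports Defs
begin

text \<open>
  Since \<open>C r \<alpha> = 0\<close>, the forms \<open>gb \<alpha>\<close> with \<alpha> \<ge> 2 see \<open>E r\<close> only through \<open>\<theta> = g p\<close>:
  \<open>gb \<alpha> X Y = C (r+1) \<alpha> \<theta>(X) \<theta>(Y)\<close> for X \<in> E r. Hence the null vector p lies in W,
  so \<open>\<theta>\<close> vanishes on \<open>W\<^sup>\<perp>\<close> and E r is contained in the left-hand side. Conversely,
  linear independence of the r + 1 forms forces, for each \<beta> \<noteq> r, some \<open>C \<beta> \<alpha> \<noteq> 0\<close>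
  with \<alpha> \<ge> 2 (otherwise r forms would lie in the span of r - 1 forms). On \<open>V \<times> E \<beta>\<close>
  that form is \<open>C \<beta> \<alpha> g\<close>, which gives \<open>E \<beta> \<subseteq> W\<^sup>\<perp>\<close>, and non-degeneracy of g on
  \<open>E \<beta>\<close> then kills the \<open>E \<beta>\<close>-component of every X in the left-hand side.
\<close>

lemma homogeneous_system_pivot_elimination:
  fixes v :: "'a \<Rightarrow> 'b \<Rightarrow> real" and c' :: "'a \<Rightarrow> real" and b :: 'b
  assumes "finite A'" "a0 \<notin> A'"
  defines "c \<equiv> c'(a0 := - (\<Sum>a\<in>A'. c' a * v a b) / v a0 b)"
  shows "(\<Sum>a\<in>insert a0 A'. c a * v a b') =
           (\<Sum>a\<in>A'. c' a * (v a b' - v a b / v a0 b * v a0 b'))"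
proof -
  have "(\<Sum>a\<in>A'. c a * v a b') = (\<Sum>a\<in>A'. c' a * v a b')"
    using assms(2) unfolding c_def by (intro sum.cong) auto
  then have "(\<Sum>a\<in>insert a0 A'. c a * v a b') = c a0 * v a0 b' + (\<Sum>a\<in>A'. c' a * v a b')"
    using assms(1,2) by simp
  also have "c a0 * v a0 b' = - (\<Sum>a\<in>A'. c' a * v a b * (v a0 b' / v a0 b))"
    unfolding c_def by (simp add: sum_distrib_right sum_divide_distrib)
  also have "\<dots> + (\<Sum>a\<in>A'. c' a * v a b') =
      (\<Sum>a\<in>A'. c' a * (v a b' - v a b / v a0 b * v a0 b'))"
    by (simp add: sum_subtractf[symmetric] algebra_simps)
  finally show ?thesis .
qed

lemma homogeneous_system_nontrivial_solution:
  fixes v :: "'a \<Rightarrow> 'b \<Rightarrow> real"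
  assumes "finite B" "finite A" "card B < card A"
  shows "\<exists>c. (\<exists>a\<in>A. c a \<noteq> 0) \<and> (\<forall>b\<in>B. (\<Sum>a\<in>A. c a * v a b) = 0)"
  using assms
proof (induction B arbitrary: A v rule: finite_induct)
  case empty
  then obtain a where "a \<in> A" by fastforce
  then show ?case by (intro exI[of _ "\<lambda>_. 1"]) auto
next
  case (insert b B)
  show ?case
  proof (cases "\<forall>a\<in>A. v a b = 0")
    case True
    with insert show ?thesis by fastforce
  next
    case False
    then obtain a0 where a0: "a0 \<in> A" "v a0 b \<noteq> 0" by blast
    define A' where "A' = A - {a0}"
    have A: "A = insert a0 A'" "a0 \<notin> A'" "finite A'" "card B < card A'"
      using a0 insert unfolding A'_def by (auto simp: card_Diff_singleton)
    \<comment> \<open>eliminate the unknown a0 by means of the equation indexed by b\<close>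
    obtain c' where c':
      "\<exists>a\<in>A'. c' a \<noteq> 0"
      "\<forall>b'\<in>B. (\<Sum>a\<in>A'. c' a * (v a b' - v a b / v a0 b * v a0 b')) = 0"
      using A insert.IH[of A' "\<lambda>a b'. v a b' - v a b / v a0 b * v a0 b'"] by blast
    define c where "c = c'(a0 := - (\<Sum>a\<in>A'. c' a * v a b) / v a0 b)"
    have "(\<Sum>a\<in>A. c a * v a b') = (\<Sum>a\<in>A'. c' a * (v a b' - v a b / v a0 b * v a0 b'))"
      for b'
      unfolding A(1) c_def using A(3,2) by (rule homogeneous_system_pivot_elimination)
    with c'(2) a0(2) have "\<forall>b'\<in>insert b B. (\<Sum>a\<in>A. c a * v a b') = 0"
      by simp
    moreover have "\<exists>a\<in>A. c a \<noteq> 0"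
      using c'(1) A unfolding c_def by auto
    ultimately show ?thesis by blast
  qed
qed

lemma dcomp_unique:
  assumes "direct_sum E r" "\<forall>i\<in>{1..r}. x i \<in> E i" "\<beta> \<in> {1..r}"
  shows "dcomp E r \<beta> (\<Sum>i=1..r. x i) = x \<beta>"
  unfolding dcomp_def
proof (rule the_equality)
  show "\<exists>x'. (\<forall>i\<in>{1..r}. x' i \<in> E i) \<and> (\<Sum>i=1..r. x i) = (\<Sum>i=1..r. x' i) \<and> x \<beta> = x' \<beta>"
    using assms(2) by blast
next
  fix y
  assume "\<exists>x'. (\<forall>i\<in>{1..r}. x' i \<in> E i) \<and> (\<Sum>i=1..r. x i) = (\<Sum>i=1..r. x' i) \<and> y = x' \<beta>"
  then obtain x' where x': "\<forall>i\<in>{1..r}. x' i \<in> E i" "(\<Sum>i=1..r. x i) = (\<Sum>i=1..r. x' i)"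
    "y = x' \<beta>"
    by blast
  have unique_zero: "\<And>z. \<forall>i\<in>{1..r}. z i \<in> E i \<Longrightarrow> (\<Sum>i=1..r. z i) = 0 \<Longrightarrow>
      \<forall>i\<in>{1..r}. z i = 0"
    using assms(1) unfolding direct_sum_def by blast
  have "\<forall>i\<in>{1..r}. x' i - x i \<in> E i"
    using assms(1,2) x'(1) unfolding direct_sum_def by (auto intro: subspace_diff)
  moreover have "(\<Sum>i=1..r. x' i - x i) = 0"
    using x'(2) by (simp add: sum_subtractf)
  ultimately have "\<forall>i\<in>{1..r}. x' i - x i = 0"
    by (rule unique_zero)
  with assms(3) x'(3) show "y = x \<beta>" by simp
qed

lemma
  assumes "direct_sum E r"
  shows dcomp_mem: "\<beta> \<in> {1..r} \<Longrightarrow> dcomp E r \<beta> v \<in> E \<beta>"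
    and sum_dcomp: "(\<Sum>i=1..r. dcomp E r i v) = v"
proof -
  obtain x where x: "\<forall>i\<in>{1..r}. x i \<in> E i" "v = (\<Sum>i=1..r. x i)"
    using assms unfolding direct_sum_def by blast
  then have "\<forall>\<beta>\<in>{1..r}. dcomp E r \<beta> v = x \<beta>"
    using dcomp_unique[OF assms] by blast
  with x show "\<beta> \<in> {1..r} \<Longrightarrow> dcomp E r \<beta> v \<in> E \<beta>" and "(\<Sum>i=1..r. dcomp E r i v) = v"
    by auto
qed

lemma dcomp_of_mem:
  assumes "direct_sum E r" "v \<in> E j" "j \<in> {1..r}" "\<beta> \<in> {1..r}"
  shows "dcomp E r \<beta> v = (if \<beta> = j then v else 0)"
proof -
  have "\<forall>i\<in>{1..r}. (if i = j then v else 0) \<in> E i"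
    using assms(1,2) unfolding direct_sum_def by (auto intro: subspace_0)
  from dcomp_unique[OF assms(1) this assms(4)] assms(3) show ?thesis by simp
qed

lemma mem_component_if_other_dcomp_zero:
  assumes "direct_sum E r" "j \<in> {1..r}" "\<forall>\<beta>\<in>{1..r}. \<beta> \<noteq> j \<longrightarrow> dcomp E r \<beta> X = 0"
  shows "X \<in> E j"
proof -
  have "X = (\<Sum>\<beta>=1..r. dcomp E r \<beta> X)"
    using sum_dcomp[OF assms(1)] by simp
  also have "\<dots> = (\<Sum>\<beta>=1..r. if \<beta> = j then dcomp E r j X else 0)"
    using assms(3) by (intro sum.cong) auto
  also have "\<dots> = dcomp E r j X"
    using assms(2) by simp
  finally show ?thesis
    using dcomp_mem[OF assms(1,2), of X] by argo
qed

lemma form_eq_dcomp_form_right: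
  assumes "bilinear g" "direct_sum E r"
    and orth: "\<forall>i\<in>{1..r}. \<forall>j\<in>{1..r}. i \<noteq> j \<longrightarrow> (\<forall>x\<in>E i. \<forall>y\<in>E j. g x y = 0)"
    and "Y \<in> E \<beta>" "\<beta> \<in> {1..r}"
  shows "g X Y = g (dcomp E r \<beta> X) Y"
proof -
  have "g X Y = g (\<Sum>i=1..r. dcomp E r i X) Y"
    by (simp only: sum_dcomp[OF assms(2)])
  also have "\<dots> = (\<Sum>i=1..r. g (dcomp E r i X) Y)"
    using linear_sum[of "\<lambda>x. g x Y"] assms(1) unfolding bilinear_def by simp
  also have "\<dots> = (\<Sum>i=1..r. if i = \<beta> then g (dcomp E r \<beta> X) Y else 0)"
    using orth dcomp_mem[OF assms(2)] assms(4,5) by (intro sum.cong) auto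
  also have "\<dots> = g (dcomp E r \<beta> X) Y"
    using assms(5) by simp
  finally show ?thesis .
qed

lemma gcomp_right_mem:
  assumes "bilinear g" "direct_sum E r" "Y \<in> E \<beta>" "\<beta> \<in> {1..r}" "\<gamma> \<in> {1..r}"
  shows "gcomp g E r \<gamma> X Y = (if \<gamma> = \<beta> then g (dcomp E r \<beta> X) Y else 0)"
  using dcomp_of_mem[OF assms(2-5)] bilinear_rzero[OF assms(1)] assms(3)
  unfolding gcomp_def by simp

lemma component_expansion_right_mem:
  assumes "bilinear g" "direct_sum E r"
    and h: "\<forall>X Y. h X Y = (\<Sum>\<gamma>=1..r. c \<gamma> * gcomp g E r \<gamma> X Y) + d * (\<theta> X * \<theta> Y)"
    and "Y \<in> E \<beta>" "\<beta> \<in> {1..r}"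
  shows "h X Y = c \<beta> * g (dcomp E r \<beta> X) Y + d * (\<theta> X * \<theta> Y)"
proof -
  have "(\<Sum>\<gamma>=1..r. c \<gamma> * gcomp g E r \<gamma> X Y) =
      (\<Sum>\<gamma>=1..r. if \<gamma> = \<beta> then c \<beta> * g (dcomp E r \<beta> X) Y else 0)"
    using gcomp_right_mem[OF assms(1,2,4,5)] by (intro sum.cong) auto
  with h assms(5) show ?thesis by simp
qed

lemma dcomp_eq_zero_if_annihilates_orth_compl:
  assumes "bilinear g" "direct_sum E r"
    and orth: "\<forall>i\<in>{1..r}. \<forall>j\<in>{1..r}. i \<noteq> j \<longrightarrow> (\<forall>x\<in>E i. \<forall>y\<in>E j. g x y = 0)"
    and nondeg: "nondegenerate_on g (E \<beta>)" and \<beta>: "\<beta> \<in> {1..r}"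
    and "c \<noteq> 0" and h: "\<And>w Y. Y \<in> E \<beta> \<Longrightarrow> h w Y = c * g (dcomp E r \<beta> w) Y"
    and "W \<subseteq> kerb h" and X: "\<forall>Y\<in>g_orth_compl g W. h X Y = 0"
  shows "dcomp E r \<beta> X = 0"
proof -
  have "Y \<in> g_orth_compl g W" if Y: "Y \<in> E \<beta>" for Y
  proof -
    have "g (dcomp E r \<beta> w) Y = 0" if "w \<in> W" for w
      using h[OF Y, of w] \<open>c \<noteq> 0\<close> \<open>W \<subseteq> kerb h\<close> that unfolding kerb_def by auto
    then show ?thesis
      using form_eq_dcomp_form_right[OF assms(1-3) Y \<beta>] unfolding g_orth_compl_def by simp
  qed
  with X h \<open>c \<noteq> 0\<close> have "\<forall>Y\<in>E \<beta>. g (dcomp E r \<beta> X) Y = 0"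
    by fastforce
  with nondeg dcomp_mem[OF assms(2) \<beta>] show ?thesis
    unfolding nondegenerate_on_def by blast
qed

lemma independent_forms_coefficient_nonzero:
  fixes h F :: "nat \<Rightarrow> 'a \<Rightarrow> 'a \<Rightarrow> real" and C :: "nat \<Rightarrow> nat \<Rightarrow> real"
  assumes indep: "\<forall>c. (\<forall>X Y. (\<Sum>\<alpha>=1..n+1. c \<alpha> * h \<alpha> X Y) = 0) \<longrightarrow> (\<forall>\<alpha>\<in>{1..n+1}. c \<alpha> = 0)"
    and expand: "\<forall>\<alpha>\<in>{2..n+1}. \<forall>X Y. h \<alpha> X Y = (\<Sum>\<gamma>=1..n+1. C \<gamma> \<alpha> * F \<gamma> X Y)"
    and "k \<in> {1..n+1}" and zero_row: "\<forall>\<alpha>\<in>{2..n+1}. C k \<alpha> = 0"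
    and "\<beta> \<in> {1..n+1}" "\<beta> \<noteq> k"
  shows "\<exists>\<alpha>\<in>{2..n+1}. C \<beta> \<alpha> \<noteq> 0"
proof (rule ccontr)
  assume "\<not> ?thesis"
  then have zero_row_\<beta>: "\<forall>\<alpha>\<in>{2..n+1}. C \<beta> \<alpha> = 0" by blast
  define A where "A = {2..n+1}"
  define B where "B = {1..n+1} - {k, \<beta>}"
  have "card B = n + 1 - 2"
    using assms(3,5,6) unfolding B_def by (subst card_Diff_subset) auto
  then have "card B < card A"
    using assms(3,5,6) unfolding A_def by auto
  then obtain c where c: "\<exists>\<alpha>\<in>A. c \<alpha> \<noteq> 0" "\<forall>\<gamma>\<in>B. (\<Sum>\<alpha>\<in>A. c \<alpha> * C \<gamma> \<alpha>) = 0"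
    using homogeneous_system_nontrivial_solution[of B A "\<lambda>\<alpha> \<gamma>. C \<gamma> \<alpha>"]
    unfolding A_def B_def by auto
  have "(\<Sum>\<alpha>=1..n+1. (if \<alpha> \<in> A then c \<alpha> else 0) * h \<alpha> X Y) = 0" for X Y
  proof -
    have h_B: "h \<alpha> X Y = (\<Sum>\<gamma>\<in>B. C \<gamma> \<alpha> * F \<gamma> X Y)" if "\<alpha> \<in> A" for \<alpha>
    proof -
      have "h \<alpha> X Y = (\<Sum>\<gamma>\<in>{1..n+1}. C \<gamma> \<alpha> * F \<gamma> X Y)"
        using expand that unfolding A_def by blast
      also have "\<dots> = (\<Sum>\<gamma>\<in>B. C \<gamma> \<alpha> * F \<gamma> X Y)"
        using that zero_row zero_row_\<beta> unfolding A_def B_def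
        by (intro sum.mono_neutral_cong_right) auto
      finally show ?thesis .
    qed
    have "(\<Sum>\<alpha>=1..n+1. (if \<alpha> \<in> A then c \<alpha> else 0) * h \<alpha> X Y) = (\<Sum>\<alpha>\<in>A. c \<alpha> * h \<alpha> X Y)"
      unfolding A_def by (intro sum.mono_neutral_cong_right) auto
    also have "\<dots> = (\<Sum>\<gamma>\<in>B. (\<Sum>\<alpha>\<in>A. c \<alpha> * C \<gamma> \<alpha>) * F \<gamma> X Y)"
      using h_B by (simp add: sum_distrib_left sum_distrib_right mult.assoc sum.swap[of _ B])
    also have "\<dots> = 0"
      using c(2) by simp
    finally show ?thesis .
  qed
  then have "\<forall>\<alpha>\<in>{1..n+1}. (if \<alpha> \<in> A then c \<alpha> else 0) = 0"
    using indep[rule_format, of "\<lambda>\<alpha>. if \<alpha> \<in> A then c \<alpha> else 0"] by blast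
  moreover obtain \<alpha> where "\<alpha> \<in> A" "c \<alpha> \<noteq> 0"
    using c(1) by blast
  moreover have "A \<subseteq> {1..n+1}"
    unfolding A_def by auto
  ultimately show False by (metis subsetD)
qed

lemma expansion_coefficient_nonzero:
  assumes "\<forall>c. (\<forall>X Y. (\<Sum>\<alpha>=1..r+1. c \<alpha> * h \<alpha> X Y) = 0) \<longrightarrow> (\<forall>\<alpha>\<in>{1..r+1}. c \<alpha> = 0)"
    and expand: "\<forall>\<alpha>\<in>{1..r+1}. \<forall>X Y. h \<alpha> X Y =
      (\<Sum>\<gamma>=1..r. C \<gamma> \<alpha> * gcomp g E r \<gamma> X Y) + C (r+1) \<alpha> * (\<theta> X * \<theta> Y)"
    and "\<forall>\<alpha>\<in>{2..r+1}. C r \<alpha> = 0" "\<beta> \<in> {1..r}" "\<beta> \<noteq> r"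
  shows "\<exists>\<alpha>\<in>{2..r+1}. C \<beta> \<alpha> \<noteq> 0"
proof -
  define F where "F \<gamma> = (if \<gamma> \<le> r then gcomp g E r \<gamma> else (\<lambda>X Y. \<theta> X * \<theta> Y))" for \<gamma>
  have "\<forall>\<alpha>\<in>{2..r+1}. \<forall>X Y. h \<alpha> X Y = (\<Sum>\<gamma>=1..r+1. C \<gamma> \<alpha> * F \<gamma> X Y)"
    using expand unfolding F_def by simp
  with assms(1,3-5) show ?thesis
    by (intro independent_forms_coefficient_nonzero[of h r C F r]) auto
qed

theorem lemma3:
  fixes g :: "'a::euclidean_space \<Rightarrow> 'a \<Rightarrow> real"
    and E :: "nat \<Rightarrow> 'a set" and r :: nat and p :: 'a
    and gb :: "nat \<Rightarrow> 'a \<Rightarrow> 'a \<Rightarrow> real" and C :: "nat \<Rightarrow> nat \<Rightarrow> real"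
  assumes "r \<ge> 1"
    and "lorentzian g"
    and "direct_sum E r"
    and "\<forall>i\<in>{1..r}. \<forall>j\<in>{1..r}. i \<noteq> j \<longrightarrow> (\<forall>x\<in>E i. \<forall>y\<in>E j. g x y = 0)"
    and "\<forall>i\<in>{1..r}. nondegenerate_on g (E i)"
    and "lorentzian_on g (E r)"
    and "p \<in> E r" and "p \<noteq> 0" and "g p p = 0"
    and "\<forall>\<alpha>\<in>{1..r+1}. sym_bilinear (gb \<alpha>)"
    and "gb 1 = g"
    and "\<forall>c. (\<forall>X Y. (\<Sum>\<alpha>=1..r+1. c \<alpha> * gb \<alpha> X Y) = 0) \<longrightarrow> (\<forall>\<alpha>\<in>{1..r+1}. c \<alpha> = 0)"
    and "\<forall>\<alpha>\<in>{1..r+1}. \<forall>X Y. gb \<alpha> X Y =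
            (\<Sum>\<beta>=1..r. C \<beta> \<alpha> * gcomp g E r \<beta> X Y) + C (r+1) \<alpha> * (g p X * g p Y)"
    and "\<forall>\<alpha>\<in>{2..r+1}. C r \<alpha> = 0 \<and> C (r+1) \<alpha> \<noteq> 0"
  shows "{X. \<forall>\<alpha>\<in>{2..r+1}. \<forall>Y\<in>g_orth_compl g (\<Inter>\<alpha>\<in>{2..r+1}. kerb (gb \<alpha>)). gb \<alpha> X Y = 0} = E r"
    (is "?L = E r")
proof -
  note ds = assms(3) and orth = assms(4) and gbdef = assms(13) and Cc = assms(14)
  define W where "W = (\<Inter>\<alpha>\<in>{2..r+1}. kerb (gb \<alpha>))"
  have g: "bilinear g" using assms(2) unfolding lorentzian_def sym_bilinear_def by auto
  have r: "r \<in> {1..r}" using assms(1) by simp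
  have gb_right: "gb \<alpha> X Y = C \<beta> \<alpha> * g (dcomp E r \<beta> X) Y + C (r+1) \<alpha> * (g p X * g p Y)"
    if "\<alpha> \<in> {1..r+1}" "Y \<in> E \<beta>" "\<beta> \<in> {1..r}" for \<alpha> X Y \<beta>
    by (rule component_expansion_right_mem[OF g ds _ that(2,3)]) (use gbdef that(1) in blast)
  have gb_Er: "gb \<alpha> X Y = C (r+1) \<alpha> * (g p X * g p Y)" if "\<alpha> \<in> {2..r+1}" "X \<in> E r" for \<alpha> X Y
    using gb_right[of \<alpha> X r Y] assms(10) Cc that r unfolding sym_bilinear_def by auto
  have "p \<in> W" unfolding W_def kerb_def using gb_Er assms(7,9) by simp
  then have orth_p: "g p Y = 0" if "Y \<in> g_orth_compl g W" for Y
    using that unfolding g_orth_compl_def by blast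
  have "dcomp E r \<beta> X = 0" if X: "X \<in> ?L" and \<beta>: "\<beta> \<in> {1..r}" "\<beta> \<noteq> r" for X \<beta>
  proof -
    obtain \<alpha> where \<alpha>: "\<alpha> \<in> {2..r+1}" "C \<beta> \<alpha> \<noteq> 0"
      using expansion_coefficient_nonzero[OF assms(12) gbdef _ \<beta>] Cc by blast
    have "g p Y = 0" if "Y \<in> E \<beta>" for Y
      using orth r assms(7) \<beta> that by metis
    then have "gb \<alpha> w Y = C \<beta> \<alpha> * g (dcomp E r \<beta> w) Y" if "Y \<in> E \<beta>" for w Y
      using gb_right[of \<alpha> Y \<beta> w] \<alpha>(1) \<beta>(1) that by simp
    moreover have "W \<subseteq> kerb (gb \<alpha>)" unfolding W_def using \<alpha>(1) by blast
    ultimately show ?thesis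
      using dcomp_eq_zero_if_annihilates_orth_compl[OF g ds orth _ \<beta>(1) \<alpha>(2)] assms(5)
        X \<alpha>(1) \<beta>(1) unfolding W_def by blast
  qed
  then have "?L \<subseteq> E r"
    using mem_component_if_other_dcomp_zero[OF ds r] by blast
  moreover have "E r \<subseteq> ?L"
    using gb_Er orth_p unfolding W_def by auto
  ultimately show ?thesis by blast
qed

end
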